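(* Let $n\ge1$, let $\Gamma=\mathrm{Int}(2^{[n]})$ be the interval subdivision of the $(n-1)$-dimensional simplex on $[n]=\{1,\dots,n\}$, and let $\partial(\Gamma)$ be its boundary. Then $h(\partial(\Gamma),x)=B^{++}_n(x)$.
   Context: $\mathrm{Int}(2^{[n]})$ is the order complex of the poset $\{[A,B]:\emptyset\ne A\subseteq B\subseteq[n]\}$ with $[A,B]\le[A',B']$ iff $A'\subseteq A\subseteq B\subseteq B'$. Its boundary $\partial(\Gamma)$ is the subcomplex of chains of intervals $[A,B]$ with $B\ne[n]$, i.e. the interval subdivision of the boundary complex $\partial(2^{[n]})$ (all proper subsets of $[n]$); it has dimension $n-2$. For a $(d-1)$-dimensional complex with $f$-polynomial $f(x)=\sum_if_ix^i$ ($f_i$ = number of faces with $i$ vertices), $h(x)=(1-x)^df(x/(1-x))$. $B_n$ is the group of signed permutations $\sigma=\sigma_1\cdots\sigma_n$ of $\{\pm1,\dots,\pm n\}$; with $\sigma_0=0$, $\mathrm{des}_B(\sigma)=|\{i\in\{0,\dots,n-1\}:\sigma_i>\sigma_{i+1}\}|$; $B^{++}_n(x)=\sum x^{\mathrm{des}_B(\sigma)}$ over $\sigma\in B_n$ with $\sigma_1>0$ and $\sigma_n>0$. *)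

theory Defs
  imports "HOL-Computational_Algebra.Polynomial"
begin

definition interval_poset :: "nat \<Rightarrow> (nat set \<times> nat set) set" where
  "interval_poset n = {(A, B). A \<noteq> {} \<and> A \<subseteq> B \<and> B \<subseteq> {1..n}}"

definition interval_le :: "nat set \<times> nat set \<Rightarrow> nat set \<times> nat set \<Rightarrow> bool" where
  "interval_le I J = (fst J \<subseteq> fst I \<and> snd I \<subseteq> snd J)"

(* order complex of a poset: faces are the finite chains (including the empty face) *)
definition order_complex :: "'a set \<Rightarrow> ('a \<Rightarrow> 'a \<Rightarrow> bool) \<Rightarrow> 'a set set" where
  "order_complex P le = {C. C \<subseteq> P \<and> finite C \<and> (\<forall>x\<in>C. \<forall>y\<in>C. le x y \<or> le y x)}"

definition Int_complex :: "nat \<Rightarrow> (nat set \<times> nat set) set set" where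
  "Int_complex n = order_complex (interval_poset n) interval_le"

definition Int_boundary :: "nat \<Rightarrow> (nat set \<times> nat set) set set" where
  "Int_boundary n = {C \<in> Int_complex n. \<forall>I\<in>C. snd I \<noteq> {1..n}}"

(* f_i = number of faces with i vertices *)
definition fnum :: "'a set set \<Rightarrow> nat \<Rightarrow> nat" where
  "fnum K i = card {F \<in> K. card F = i}"

(* d = dimension + 1 = maximal number of vertices of a face *)
definition cdim1 :: "'a set set \<Rightarrow> nat" where
  "cdim1 K = Max (card ` K)"

(* h(x) = (1-x)^d f(x/(1-x)) = sum_i f_i x^i (1-x)^(d-i) *)
definition h_poly :: "'a set set \<Rightarrow> int poly" where
  "h_poly K = (\<Sum>i\<le>cdim1 K. of_nat (fnum K i) * [:0, 1:] ^ i * [:1, -1:] ^ (cdim1 K - i))"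

(* signed permutations of {\<plusminus>1..\<plusminus>n}, as functions on {1..n}, zero elsewhere (so \<sigma> 0 = 0) *)
definition signed_perms :: "nat \<Rightarrow> (nat \<Rightarrow> int) set" where
  "signed_perms n = {\<sigma>. (\<forall>i. i \<notin> {1..n} \<longrightarrow> \<sigma> i = 0) \<and>
                          bij_betw (\<lambda>i. nat \<bar>\<sigma> i\<bar>) {1..n} {1..n}}"

definition desB :: "nat \<Rightarrow> (nat \<Rightarrow> int) \<Rightarrow> nat" where
  "desB n \<sigma> = card {i \<in> {0..<n}. \<sigma> i > \<sigma> (Suc i)}"

definition Bpp :: "nat \<Rightarrow> int poly" where
  "Bpp n = (\<Sum>\<sigma>\<in>{\<sigma> \<in> signed_perms n. \<sigma> 1 > 0 \<and> \<sigma> n > 0}. monom 1 (desB n \<sigma>))"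

end

(*
  Both sides are compared as formal power series: each equals
  (1 - x)^(n-1) * sum_m D(2m) x^m, where D is the second backward difference of j |-> (j+1)^n
  (extended by 0 to j < 0), so D(0) = 1 and D(2m) = (2m+1)^n - 2(2m)^n + (2m-1)^n for m > 0.

  Boundary side: for the order complex of a finite poset, h(x) = (1 - x)^d * sum_m Z(m) x^m, where
  Z(m) is the number of multichains of length m, because the multichains of length m onto a chain
  with i elements correspond to the compositions of m into i parts.  A multichain
  [A_0,B_0] <= ... <= [A_(m-1),B_(m-1)] of intervals is encoded by the level function
  g(x) = #{j. x notin A_j} + #{j. x notin B_j}.  As the A_j shrink inside the growing B_j, this is a
  bijection onto maps [n] -> {0..2m}, and the boundary conditions (A_j nonempty, B_j <> [n]) say
  exactly that g attains 0 and 2m; inclusion-exclusion gives Z(m) = D(2m).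

  Signed permutation side: count the descents of the word 0 s_1 ... s_n 0 (this is des_B + 1 when
  s_n > 0) and refine by the signs of s_1 and s_n.  Inserting +-n at position p of a signed
  permutation of [n-1] adds a descent unless p - 1 was a descent.  This gives a linear recurrence in
  n for the four refined series, which (1 - x)^(n-1) * sum_m D(2m - 1 - c) x^m satisfies
  coefficientwise, c being the number of descents forced at the two ends.
*)

theory Submission
  imports Defs "HOL-Computational_Algebra.Polynomial_FPS" "HOL-Library.FuncSet"
begin

section \<open>Multichains and the h-polynomial of an order complex\<close>

fun compositions :: "nat \<Rightarrow> nat \<Rightarrow> nat" where
  "compositions 0 i = of_bool (i = 0)"
| "compositions (Suc m) 0 = 0"
| "compositions (Suc m) (Suc i) = compositions m (Suc i) + compositions m i"

lemma compositions_series: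
  "(1 - fps_X) ^ i * Abs_fps (\<lambda>m. of_nat (compositions m i)) = (fps_X ^ i :: int fps)"
proof (induction i)
  case 0
  have "Abs_fps (\<lambda>m. of_nat (compositions m 0)) = (1 :: int fps)"
    by (simp add: fps_eq_iff) (metis compositions.simps(2) gr0_conv_Suc)
  then show ?case by simp
next
  case (Suc i)
  let ?A = "\<lambda>i. Abs_fps (\<lambda>m. of_nat (compositions m i)) :: int fps"
  have step: "(1 - fps_X) * ?A (Suc i) = fps_X * ?A i"
    by (simp add: fps_eq_iff algebra_simps fps_X_mult_nth) (auto simp: gr0_conv_Suc)
  have "(1 - fps_X) ^ Suc i * ?A (Suc i) = (1 - fps_X) ^ i * ((1 - fps_X) * ?A (Suc i))"
    by (simp only: power_Suc ac_simps)
  also have "\<dots> = fps_X * ((1 - fps_X) ^ i * ?A i)"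
    by (simp only: step ac_simps)
  finally show ?case
    using Suc.IH by simp
qed

definition multichains :: "('a \<Rightarrow> 'a \<Rightarrow> bool) \<Rightarrow> 'a set \<Rightarrow> nat \<Rightarrow> (nat \<Rightarrow> 'a) set" where
  "multichains le P m = {M \<in> {..<m} \<rightarrow>\<^sub>E P. monotone_on {..<m} (\<le>) le M}"

definition multichains_onto :: "('a \<Rightarrow> 'a \<Rightarrow> bool) \<Rightarrow> 'a set \<Rightarrow> nat \<Rightarrow> (nat \<Rightarrow> 'a) set" where
  "multichains_onto le C m = {M \<in> multichains le C m. M ` {..<m} = C}"

lemma finite_multichains: "finite P \<Longrightarrow> finite (multichains le P m)"
  unfolding multichains_def by (rule finite_subset[of _ "{..<m} \<rightarrow>\<^sub>E P"]) (auto intro: finite_PiE)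

lemma card_multichains_onto_0: "card (multichains_onto le C 0) = of_bool (C = {})"
  by (auto simp: multichains_onto_def multichains_def)

lemma card_multichains_0: "card (multichains le P 0) = 1"
  by (simp add: multichains_def)

lemma finite_chain_has_greatest:
  assumes "reflp le" "transp le" "finite C" "C \<noteq> {}" "Complete_Partial_Order.chain le C"
  shows "\<exists>t\<in>C. \<forall>x\<in>C. le x t"
  using assms(3-5)
proof (induction C rule: finite_ne_induct)
  case (singleton x)
  then show ?case using \<open>reflp le\<close> by (simp add: reflpD)
next
  case (insert x F)
  then obtain t where t: "t \<in> F" "\<forall>y\<in>F. le y t"
    using chain_subset by blast
  from insert.prems t(1) consider "le x t" | "le t x"
    by (auto elim: chainE)
  then show ?case
    using t \<open>reflp le\<close> \<open>transp le\<close> by cases (auto dest: transpD reflpD)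
qed

lemma multichain_onto_last:
  assumes "antisymp le" "t \<in> C" "\<forall>x\<in>C. le x t" "M \<in> multichains_onto le C (Suc m)"
  shows "M m = t"
proof -
  have M: "M \<in> multichains le C (Suc m)" "M ` {..<Suc m} = C"
    using assms(4) by (simp_all add: multichains_onto_def)
  then obtain i where "i < Suc m" "M i = t"
    using assms(2) by auto
  then have "le t (M m)"
    using M(1) monotone_onD[of "{..<Suc m}" "(\<le>)" le M i m] by (simp add: multichains_def)
  moreover have "le (M m) t"
    using assms(3) M(2) by auto
  ultimately show ?thesis
    using \<open>antisymp le\<close> by (auto dest: antisympD)
qed

lemma restrict_in_multichains_onto:
  assumes "antisymp le" "t \<in> C" "\<forall>x\<in>C. le x t" and M: "M \<in> multichains_onto le C (Suc m)"
  shows "restrict M {..<m} \<in> multichains_onto le C m \<union> multichains_onto le (C - {t}) m"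
proof -
  have img: "insert t (M ` {..<m}) = C"
    using multichain_onto_last[OF assms] M by (simp add: multichains_onto_def lessThan_Suc)
  have "restrict M {..<m} \<in> {..<m} \<rightarrow>\<^sub>E M ` {..<m}"
    by simp
  moreover have "monotone_on {..<m} (\<le>) le (restrict M {..<m})"
    using M by (simp add: multichains_onto_def multichains_def monotone_on_def)
  moreover have "restrict M {..<m} ` {..<m} = M ` {..<m}"
    by simp
  moreover have "M ` {..<m} = C \<or> M ` {..<m} = C - {t}"
    using img by blast
  ultimately show ?thesis
    by (auto simp: multichains_onto_def multichains_def)
qed

lemma fun_upd_in_multichains_onto:
  assumes "reflp le" "t \<in> C" "\<forall>x\<in>C. le x t"
    and M: "M \<in> multichains_onto le C m \<union> multichains_onto le (C - {t}) m"
  shows "M(m := t) \<in> multichains_onto le C (Suc m)"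
proof -
  have M': "M \<in> {..<m} \<rightarrow>\<^sub>E C" "monotone_on {..<m} (\<le>) le M" "insert t (M ` {..<m}) = C"
    using M assms(2) by (auto simp: multichains_onto_def multichains_def)
  have "M(m := t) \<in> {..<Suc m} \<rightarrow>\<^sub>E C"
    using M'(1) assms(2) by (auto simp: PiE_iff extensional_def)
  moreover have "monotone_on {..<Suc m} (\<le>) le (M(m := t))"
  proof (rule monotone_onI)
    fix i j :: nat assume "i \<in> {..<Suc m}" "j \<in> {..<Suc m}" "i \<le> j"
    then show "le ((M(m := t)) i) ((M(m := t)) j)"
      using M'(1,2) assms(1,3) by (auto simp: less_Suc_eq monotone_on_def reflpD)
  qed
  moreover have "M(m := t) ` {..<Suc m} = C"
    using M'(3) by (auto simp: lessThan_Suc)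
  ultimately show ?thesis
    by (simp add: multichains_onto_def multichains_def)
qed

lemma bij_betw_restrict_multichains_onto:
  assumes "reflp le" "antisymp le" "t \<in> C" "\<forall>x\<in>C. le x t"
  shows "bij_betw (\<lambda>M. restrict M {..<m}) (multichains_onto le C (Suc m))
           (multichains_onto le C m \<union> multichains_onto le (C - {t}) m)"
proof (rule bij_betwI[where g = "\<lambda>M. M(m := t)"])
  show "(\<lambda>M. restrict M {..<m}) \<in> multichains_onto le C (Suc m)
          \<rightarrow> multichains_onto le C m \<union> multichains_onto le (C - {t}) m"
    using restrict_in_multichains_onto[OF assms(2-4)] by blast
  show "(\<lambda>M. M(m := t)) \<in> multichains_onto le C m \<union> multichains_onto le (C - {t}) m
          \<rightarrow> multichains_onto le C (Suc m)"
    using fun_upd_in_multichains_onto[OF assms(1,3,4)] by blast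
  show "(restrict M {..<m})(m := t) = M" if "M \<in> multichains_onto le C (Suc m)" for M
  proof
    fix i
    show "((restrict M {..<m})(m := t)) i = M i"
      using that multichain_onto_last[OF assms(2-4) that]
      by (cases "i < Suc m") (auto simp: multichains_onto_def multichains_def PiE_iff extensional_def)
  qed
  show "restrict (M(m := t)) {..<m} = M"
    if "M \<in> multichains_onto le C m \<union> multichains_onto le (C - {t}) m" for M
  proof
    fix i
    show "restrict (M(m := t)) {..<m} i = M i"
      using that by (auto simp: multichains_onto_def multichains_def PiE_iff extensional_def)
  qed
qed

lemma card_multichains_onto:
  assumes "reflp le" "transp le" "antisymp le" "finite C" "Complete_Partial_Order.chain le C"
  shows "card (multichains_onto le C m) = compositions m (card C)"
  using assms(4,5)
proof (induction m arbitrary: C)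
  case 0
  then show ?case by (simp add: card_multichains_onto_0)
next
  case (Suc m)
  show ?case
  proof (cases "C = {}")
    case True
    have "{..<Suc m} \<noteq> {}" by auto
    with True show ?thesis by (simp add: multichains_onto_def)
  next
    case False
    then obtain t where t: "t \<in> C" "\<forall>x\<in>C. le x t"
      using finite_chain_has_greatest assms(1,2) Suc.prems by blast
    have fin: "finite (multichains_onto le D m)" if "finite D" for D
      using finite_multichains[OF that] by (rule rev_finite_subset) (auto simp: multichains_onto_def)
    have "card (multichains_onto le C (Suc m))
        = card (multichains_onto le C m \<union> multichains_onto le (C - {t}) m)"
      using bij_betw_restrict_multichains_onto[OF assms(1,3) t] by (rule bij_betw_same_card)
    also have "\<dots> = card (multichains_onto le C m) + card (multichains_onto le (C - {t}) m)"
      using t(1) Suc.prems(1) by (intro card_Un_disjoint fin) (auto simp: multichains_onto_def)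
    also have "\<dots> = compositions m (card C) + compositions m (card C - 1)"
      using Suc.IH Suc.prems t(1) by (simp add: chain_subset)
    also have "\<dots> = compositions (Suc m) (card C)"
      using False Suc.prems(1) by (cases "card C") auto
    finally show ?thesis .
  qed
qed

lemma finite_order_complex: "finite P \<Longrightarrow> finite (order_complex P le)"
  unfolding order_complex_def by (rule finite_subset[of _ "Pow P"]) auto

lemma multichains_eq_UN_order_complex:
  "multichains le P m = (\<Union>C\<in>order_complex P le. multichains_onto le C m)"
proof (intro equalityI subsetI)
  fix M assume M: "M \<in> multichains le P m"
  have mono: "monotone_on {..<m} (\<le>) le M"
    using M by (simp add: multichains_def)
  have "Complete_Partial_Order.chain le (M ` {..<m})"
  proof (rule chainI)
    fix x y assume "x \<in> M ` {..<m}" "y \<in> M ` {..<m}"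
    then obtain i j where ij: "i \<in> {..<m}" "j \<in> {..<m}" "x = M i" "y = M j"
      by blast
    consider "i \<le> j" | "j \<le> i" by linarith
    then show "le x y \<or> le y x"
      by cases (use monotone_onD[OF mono] ij in blast)+
  qed
  moreover have "M ` {..<m} \<subseteq> P"
    using M by (auto simp: multichains_def)
  ultimately have "M ` {..<m} \<in> order_complex P le"
    by (simp add: order_complex_def chain_def)
  moreover have "M \<in> multichains_onto le (M ` {..<m}) m"
    using M by (simp add: multichains_onto_def multichains_def PiE_iff)
  ultimately show "M \<in> (\<Union>C\<in>order_complex P le. multichains_onto le C m)"
    by blast
next
  fix M assume "M \<in> (\<Union>C\<in>order_complex P le. multichains_onto le C m)"
  then obtain C where "C \<subseteq> P" "M \<in> multichains le C m"
    by (auto simp: order_complex_def multichains_onto_def)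
  then show "M \<in> multichains le P m"
    by (auto simp: multichains_def PiE_iff)
qed

lemma card_multichains:
  assumes "reflp le" "transp le" "antisymp le" "finite P"
  shows "card (multichains le P m) = (\<Sum>C\<in>order_complex P le. compositions m (card C))"
proof -
  have "card (multichains le P m) = (\<Sum>C\<in>order_complex P le. card (multichains_onto le C m))"
    unfolding multichains_eq_UN_order_complex
    by (rule card_UN_disjoint)
       (auto simp: assms(4) finite_order_complex order_complex_def multichains_onto_def
             intro: finite_multichains[THEN rev_finite_subset])
  also have "\<dots> = (\<Sum>C\<in>order_complex P le. compositions m (card C))"
    by (rule sum.cong) (auto simp: order_complex_def chain_def intro!: card_multichains_onto assms)
  finally show ?thesis .
qed

lemma card_le_cdim1: "finite K \<Longrightarrow> F \<in> K \<Longrightarrow> card F \<le> cdim1 K"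
  unfolding cdim1_def by (simp add: Max_ge)

lemma sum_fnum_mult:
  assumes "finite K"
  shows "(\<Sum>i\<le>cdim1 K. fnum K i * g i) = (\<Sum>F\<in>K. g (card F))"
proof -
  have "(\<Sum>i\<le>cdim1 K. fnum K i * g i) = (\<Sum>i\<le>cdim1 K. \<Sum>F\<in>{F \<in> K. card F = i}. g (card F))"
    by (simp add: fnum_def)
  also have "\<dots> = (\<Sum>F\<in>K. g (card F))"
    using assms card_le_cdim1 by (intro sum.group) auto
  finally show ?thesis .
qed

lemma fps_of_poly_h_poly:
  assumes "finite K"
  shows "fps_of_poly (h_poly K)
    = (1 - fps_X) ^ cdim1 K * Abs_fps (\<lambda>m. \<Sum>F\<in>K. of_nat (compositions m (card F)))"
proof -
  let ?d = "cdim1 K"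
  let ?Y = "\<lambda>i. Abs_fps (\<lambda>m. of_nat (compositions m i)) :: int fps"
  have X: "fps_of_poly [:0, 1 :: int:] = fps_X" and one_minus_X: "fps_of_poly [:1, -1 :: int:] = 1 - fps_X"
    and of_nat: "fps_of_poly (of_nat k :: int poly) = of_nat k" for k
    by (simp_all add: fps_of_poly_pCons of_nat_poly fps_of_nat algebra_simps)
  have "fps_of_poly (h_poly K) = (\<Sum>i\<le>?d. of_nat (fnum K i) * fps_X ^ i * (1 - fps_X) ^ (?d - i))"
    unfolding h_poly_def by (simp only: fps_of_poly_sum fps_of_poly_mult fps_of_poly_power X one_minus_X of_nat)
  also have "\<dots> = (\<Sum>i\<le>?d. (1 - fps_X) ^ ?d * (of_nat (fnum K i) * ?Y i))"
  proof (rule sum.cong[OF refl])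
    fix i assume "i \<in> {..?d}"
    then have "(1 - fps_X :: int fps) ^ ?d = (1 - fps_X) ^ i * (1 - fps_X) ^ (?d - i)"
      by (simp flip: power_add)
    then show "of_nat (fnum K i) * fps_X ^ i * (1 - fps_X) ^ (?d - i)
        = (1 - fps_X) ^ ?d * (of_nat (fnum K i) * ?Y i)"
      by (simp add: compositions_series[of i, symmetric] algebra_simps)
  qed
  also have "\<dots> = (1 - fps_X) ^ ?d * (\<Sum>i\<le>?d. of_nat (fnum K i) * ?Y i)"
    by (simp add: sum_distrib_left)
  also have "(\<Sum>i\<le>?d. of_nat (fnum K i) * ?Y i)
      = Abs_fps (\<lambda>m. \<Sum>i\<le>?d. of_nat (fnum K i * compositions m i))"
    by (simp add: fps_eq_iff fps_sum_nth fps_of_nat[symmetric] fps_mult_left_const_nth)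
  also have "(\<lambda>m. \<Sum>i\<le>?d. of_nat (fnum K i * compositions m i))
      = (\<lambda>m. \<Sum>F\<in>K. of_nat (compositions m (card F)) :: int)"
  proof
    fix m
    show "(\<Sum>i\<le>?d. of_nat (fnum K i * compositions m i)) = (\<Sum>F\<in>K. of_nat (compositions m (card F)) :: int)"
      using sum_fnum_mult[OF assms, of "\<lambda>i. compositions m i"] by (metis (no_types) of_nat_sum)
  qed
  finally show ?thesis .
qed

lemma fps_of_poly_h_poly_order_complex:
  assumes "reflp le" "transp le" "antisymp le" "finite P"
  shows "fps_of_poly (h_poly (order_complex P le))
    = (1 - fps_X) ^ cdim1 (order_complex P le) * Abs_fps (\<lambda>m. of_nat (card (multichains le P m)))"
proof -
  have "(\<lambda>m. of_nat (card (multichains le P m)))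
      = (\<lambda>m. \<Sum>C\<in>order_complex P le. of_nat (compositions m (card C)) :: int)"
    by (simp add: card_multichains[OF assms])
  then show ?thesis
    by (simp only: fps_of_poly_h_poly[OF finite_order_complex[OF assms(4)]])
qed

section \<open>Multichains of boundary intervals\<close>

lemma card_PiE_hitting_two:
  assumes "finite A" "finite B" "a \<in> B" "b \<in> B" "a \<noteq> b"
  shows "int (card {g \<in> A \<rightarrow>\<^sub>E B. a \<in> g ` A \<and> b \<in> g ` A})
    = int (card B) ^ card A - 2 * (int (card B) - 1) ^ card A + (int (card B) - 2) ^ card A"
proof -
  let ?Na = "A \<rightarrow>\<^sub>E (B - {a})" and ?Nb = "A \<rightarrow>\<^sub>E (B - {b})"
  have eq: "{g \<in> A \<rightarrow>\<^sub>E B. a \<in> g ` A \<and> b \<in> g ` A} = (A \<rightarrow>\<^sub>E B) - (?Na \<union> ?Nb)"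
    by (auto simp: PiE_def Pi_def)
  have Int: "?Na \<inter> ?Nb = A \<rightarrow>\<^sub>E (B - {a, b})"
    by (auto simp: PiE_def Pi_def)
  have sub: "?Na \<union> ?Nb \<subseteq> A \<rightarrow>\<^sub>E B"
    by (auto simp: PiE_def Pi_def)
  have fin: "finite ?Na" "finite ?Nb"
    using assms(1,2) by (auto intro: finite_PiE)
  have "2 \<le> card B"
    using card_mono[OF assms(2), of "{a, b}"] assms(3-5) by simp
  have "int (card {g \<in> A \<rightarrow>\<^sub>E B. a \<in> g ` A \<and> b \<in> g ` A})
      = int (card (A \<rightarrow>\<^sub>E B)) - int (card ?Na) - int (card ?Nb) + int (card (?Na \<inter> ?Nb))"
    unfolding eq using card_Un_Int[OF fin] card_mono[OF _ sub] assms(1,2)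
    by (simp add: card_Diff_subset[OF finite_subset[OF sub] sub] of_nat_diff finite_PiE)
  also have "\<dots> = int (card B) ^ card A - 2 * (int (card B) - 1) ^ card A + (int (card B) - 2) ^ card A"
    unfolding Int using assms \<open>2 \<le> card B\<close> by (simp add: card_funcsetE card_Diff_subset of_nat_diff)
  finally show ?thesis .
qed

lemma reflp_interval_le: "reflp interval_le"
  by (simp add: reflp_def interval_le_def)

lemma transp_interval_le: "transp interval_le"
  by (auto simp: transp_def interval_le_def)

lemma antisymp_interval_le: "antisymp interval_le"
  by (auto simp: antisymp_def interval_le_def prod_eq_iff)

definition boundary_intervals :: "nat \<Rightarrow> (nat set \<times> nat set) set" where
  "boundary_intervals n = {I \<in> interval_poset n. snd I \<noteq> {1..n}}"

lemma mem_boundary_intervals: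
  "I \<in> boundary_intervals n \<longleftrightarrow> fst I \<noteq> {} \<and> fst I \<subseteq> snd I \<and> snd I \<subseteq> {1..n} \<and> snd I \<noteq> {1..n}"
  by (cases I) (auto simp: boundary_intervals_def interval_poset_def)

lemma Int_boundary_eq_order_complex:
  "Int_boundary n = order_complex (boundary_intervals n) interval_le"
  by (auto simp: Int_boundary_def Int_complex_def order_complex_def boundary_intervals_def)

lemma finite_boundary_intervals: "finite (boundary_intervals n)"
proof (rule finite_subset)
  show "boundary_intervals n \<subseteq> Pow {1..n} \<times> Pow {1..n}"
  proof
    fix I assume "I \<in> boundary_intervals n"
    then show "I \<in> Pow {1..n} \<times> Pow {1..n}"
      by (cases I) (simp add: mem_boundary_intervals, blast)
  qed
qed simp

lemma interval_le_card_diff_eq: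
  assumes "finite (snd J)" "fst I \<subseteq> snd I" "fst J \<subseteq> snd J" "interval_le I J"
    and "card (snd I) - card (fst I) = card (snd J) - card (fst J)"
  shows "I = J"
proof -
  have sub: "fst J \<subseteq> fst I" "fst I \<subseteq> snd I" "snd I \<subseteq> snd J"
    using assms(2,4) by (auto simp: interval_le_def)
  have fin: "finite (fst I)" "finite (snd I)"
    using sub assms(1) by (auto intro: finite_subset)
  have "card (fst J) \<le> card (fst I)" "card (fst I) \<le> card (snd I)" "card (snd I) \<le> card (snd J)"
    using sub fin assms(1) by (auto intro: card_mono)
  then have "card (fst J) = card (fst I)" "card (snd I) = card (snd J)"
    using assms(5) by linarith+
  then have "fst J = fst I" "snd I = snd J"
    using card_subset_eq[OF fin(1) sub(1)] card_subset_eq[OF assms(1) sub(3)] by simp_all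
  then show ?thesis
    by (simp add: prod_eq_iff)
qed

lemma boundary_interval_rank_less:
  assumes "I \<in> boundary_intervals n"
  shows "card (snd I) - card (fst I) < n - 1"
proof -
  have I: "fst I \<noteq> {}" "fst I \<subseteq> snd I" "snd I \<subset> {1..n}"
    using assms mem_boundary_intervals[of I n] by blast+
  then have "snd I \<subseteq> {1..n}"
    by blast
  then have "finite (snd I)" "finite (fst I)"
    using I(2) by (auto intro: finite_subset)
  with I have "1 \<le> card (fst I)" "card (fst I) \<le> card (snd I)"
    by (auto simp: Suc_le_eq card_gt_0_iff intro: card_mono)
  moreover have "card (snd I) < card {1..n}"
    using I(3) by (intro psubset_card_mono) auto
  ultimately show ?thesis by simp
qed

lemma inj_on_rank_boundary_chain:
  assumes "C \<in> order_complex (boundary_intervals n) interval_le"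
  shows "inj_on (\<lambda>I. card (snd I) - card (fst I)) C"
proof (rule inj_onI)
  have C: "C \<subseteq> boundary_intervals n" "Complete_Partial_Order.chain interval_le C"
    using assms by (auto simp: order_complex_def chain_def)
  fix I J assume IJ: "I \<in> C" "J \<in> C" "card (snd I) - card (fst I) = card (snd J) - card (fst J)"
  have sub: "fst I \<subseteq> snd I" "fst J \<subseteq> snd J" "snd I \<subseteq> {1..n}" "snd J \<subseteq> {1..n}"
    using C(1) IJ(1,2) mem_boundary_intervals[of I n] mem_boundary_intervals[of J n] by blast+
  from chainD[OF C(2) IJ(1,2)] show "I = J"
  proof
    assume "interval_le I J"
    then show "I = J"
      using interval_le_card_diff_eq[OF finite_subset[OF sub(4)] sub(1,2)] IJ(3) by simp
  next
    assume "interval_le J I"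
    then show "I = J"
      using interval_le_card_diff_eq[OF finite_subset[OF sub(3)] sub(2,1)] IJ(3) by simp
  qed
qed

lemma card_boundary_chain_le:
  assumes "C \<in> order_complex (boundary_intervals n) interval_le"
  shows "card C \<le> n - 1"
proof -
  have "C \<subseteq> boundary_intervals n"
    using assms by (simp add: order_complex_def)
  then have rank: "(\<lambda>I. card (snd I) - card (fst I)) ` C \<subseteq> {..<n - 1}"
    using boundary_interval_rank_less by auto
  show ?thesis
    using card_inj_on_le[OF inj_on_rank_boundary_chain[OF assms] rank] by simp
qed

lemma boundary_chain_of_card:
  "(\<lambda>j. ({1::nat}, {1..j})) ` {1..n - 1} \<in> order_complex (boundary_intervals n) interval_le"
  "card ((\<lambda>j. ({1::nat}, {1..j})) ` {1..n - 1}) = n - 1"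
proof -
  have "{1..j} \<noteq> {1..n}" if "j < n" for j :: nat
    using that atLeastAtMost_iff[of n 1 j] by fastforce
  then show "(\<lambda>j. ({1::nat}, {1..j})) ` {1..n - 1} \<in> order_complex (boundary_intervals n) interval_le"
    by (auto simp: order_complex_def mem_boundary_intervals interval_le_def)
  have "inj_on (\<lambda>j. ({1::nat}, {1..j})) {1..n - 1}"
    by (rule inj_onI) (simp add: Icc_eq_Icc)
  then show "card ((\<lambda>j. ({1::nat}, {1..j})) ` {1..n - 1}) = n - 1"
    by (simp add: card_image)
qed

lemma cdim1_Int_boundary: "cdim1 (Int_boundary n) = n - 1"
  unfolding cdim1_def Int_boundary_eq_order_complex
proof (rule Max_eqI)
  show "n - 1 \<in> card ` order_complex (boundary_intervals n) interval_le"
    by (metis boundary_chain_of_card image_eqI)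
  show "y \<le> n - 1" if "y \<in> card ` order_complex (boundary_intervals n) interval_le" for y
    using that card_boundary_chain_le by blast
qed (simp add: finite_order_complex finite_boundary_intervals)

lemma mem_antitone_iff_card:
  assumes "\<And>i j. i \<le> j \<Longrightarrow> j < m \<Longrightarrow> A j \<subseteq> A i" "j < m"
  shows "x \<in> A j \<longleftrightarrow> card {i \<in> {..<m}. x \<notin> A i} + j < m"
proof
  assume "x \<in> A j"
  have "{i \<in> {..<m}. x \<notin> A i} \<subseteq> {Suc j..<m}"
  proof
    fix i assume "i \<in> {i \<in> {..<m}. x \<notin> A i}"
    moreover from this have "\<not> i \<le> j"
      using \<open>x \<in> A j\<close> assms(1)[of i j] assms(2) by blast
    ultimately show "i \<in> {Suc j..<m}" by simp
  qed
  then have "card {i \<in> {..<m}. x \<notin> A i} \<le> card {Suc j..<m}"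
    by (rule card_mono[rotated]) simp
  then show "card {i \<in> {..<m}. x \<notin> A i} + j < m"
    using assms(2) by simp
next
  assume less: "card {i \<in> {..<m}. x \<notin> A i} + j < m"
  show "x \<in> A j"
  proof (rule ccontr)
    assume "x \<notin> A j"
    have "{j..<m} \<subseteq> {i \<in> {..<m}. x \<notin> A i}"
    proof
      fix i assume "i \<in> {j..<m}"
      with assms(1)[of j i] \<open>x \<notin> A j\<close> show "i \<in> {i \<in> {..<m}. x \<notin> A i}" by auto
    qed
    then have "card {j..<m} \<le> card {i \<in> {..<m}. x \<notin> A i}"
      by (rule card_mono[rotated]) simp
    with less show False by simp
  qed
qed

lemma mem_mono_iff_card:
  assumes "\<And>i j. i \<le> j \<Longrightarrow> j < m \<Longrightarrow> B i \<subseteq> B j" "j < m"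
  shows "x \<in> B j \<longleftrightarrow> card {i \<in> {..<m}. x \<notin> B i} \<le> j"
proof
  assume "x \<in> B j"
  have "{i \<in> {..<m}. x \<notin> B i} \<subseteq> {..<j}"
  proof
    fix i assume "i \<in> {i \<in> {..<m}. x \<notin> B i}"
    then have "\<not> j \<le> i"
      using \<open>x \<in> B j\<close> assms(1)[of j i] by blast
    then show "i \<in> {..<j}" by simp
  qed
  then have "card {i \<in> {..<m}. x \<notin> B i} \<le> card {..<j}"
    by (rule card_mono[rotated]) simp
  then show "card {i \<in> {..<m}. x \<notin> B i} \<le> j"
    by simp
next
  assume le: "card {i \<in> {..<m}. x \<notin> B i} \<le> j"
  show "x \<in> B j"
  proof (rule ccontr)
    assume "x \<notin> B j"
    have "{..j} \<subseteq> {i \<in> {..<m}. x \<notin> B i}"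
    proof
      fix i assume "i \<in> {..j}"
      with assms(1)[of i j] assms(2) \<open>x \<notin> B j\<close> show "i \<in> {i \<in> {..<m}. x \<notin> B i}" by auto
    qed
    then have "card {..j} \<le> card {i \<in> {..<m}. x \<notin> B i}"
      by (rule card_mono[rotated]) simp
    with le show False by simp
  qed
qed

definition spanning_maps :: "nat \<Rightarrow> nat \<Rightarrow> (nat \<Rightarrow> nat) set" where
  "spanning_maps n m = {g \<in> {1..n} \<rightarrow>\<^sub>E {0..2 * m}. 0 \<in> g ` {1..n} \<and> 2 * m \<in> g ` {1..n}}"

definition level_multichain :: "nat \<Rightarrow> nat \<Rightarrow> (nat \<Rightarrow> nat) \<Rightarrow> nat \<Rightarrow> nat set \<times> nat set" where
  "level_multichain n m g = (\<lambda>j\<in>{..<m}. ({x \<in> {1..n}. g x + j < m}, {x \<in> {1..n}. g x \<le> m + j}))"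

definition multichain_level :: "nat \<Rightarrow> nat \<Rightarrow> (nat \<Rightarrow> nat set \<times> nat set) \<Rightarrow> nat \<Rightarrow> nat" where
  "multichain_level n m M = (\<lambda>x\<in>{1..n}. card {j \<in> {..<m}. x \<notin> fst (M j)} + card {j \<in> {..<m}. x \<notin> snd (M j)})"

lemma boundary_multichainD:
  assumes "M \<in> multichains interval_le (boundary_intervals n) m" "j < m"
  shows "M j \<in> boundary_intervals n"
    and "i \<le> j \<Longrightarrow> fst (M j) \<subseteq> fst (M i)" "i \<le> j \<Longrightarrow> snd (M i) \<subseteq> snd (M j)"
  using assms monotone_onD[of "{..<m}" "(\<le>)" interval_le M i j]
  by (auto simp: multichains_def interval_le_def)

lemma boundary_multichain_mem_iff:
  assumes M: "M \<in> multichains interval_le (boundary_intervals n) m" and "j < m" "x \<in> {1..n}"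
  shows "x \<in> fst (M j) \<longleftrightarrow> multichain_level n m M x + j < m"
    and "x \<in> snd (M j) \<longleftrightarrow> multichain_level n m M x \<le> m + j"
proof -
  define a where "a = card {i \<in> {..<m}. x \<notin> fst (M i)}"
  define b where "b = card {i \<in> {..<m}. x \<notin> snd (M i)}"
  have level: "multichain_level n m M x = a + b"
    using assms(3) by (simp add: multichain_level_def a_def b_def)
  have fst_iff: "x \<in> fst (M i) \<longleftrightarrow> a + i < m" if "i < m" for i
    unfolding a_def using boundary_multichainD(2)[OF M] that by (rule mem_antitone_iff_card)
  have snd_iff: "x \<in> snd (M i) \<longleftrightarrow> b \<le> i" if "i < m" for i
    unfolding b_def using boundary_multichainD(3)[OF M] that by (rule mem_mono_iff_card)
  have "a \<le> m"
    unfolding a_def by (rule order_trans[OF card_mono[of "{..<m}"]]) auto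
  moreover have "a = m \<or> b = 0"
  proof (rule disjCI)
    assume "b \<noteq> 0"
    then have "x \<notin> snd (M 0)"
      using snd_iff \<open>j < m\<close> by simp
    moreover have "fst (M i) \<subseteq> snd (M 0)" if "i < m" for i
      using boundary_multichainD(1)[OF M, of 0] boundary_multichainD(2)[OF M that, of 0] that
      by (auto simp: mem_boundary_intervals)
    ultimately have "{i \<in> {..<m}. x \<notin> fst (M i)} = {..<m}"
      by auto
    then show "a = m" by (simp add: a_def)
  qed
  ultimately have "a + b + j < m \<longleftrightarrow> a + j < m" "a + b \<le> m + j \<longleftrightarrow> b \<le> j"
    by auto
  then show "x \<in> fst (M j) \<longleftrightarrow> multichain_level n m M x + j < m"
    and "x \<in> snd (M j) \<longleftrightarrow> multichain_level n m M x \<le> m + j"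
    using fst_iff[OF \<open>j < m\<close>] snd_iff[OF \<open>j < m\<close>] level by simp_all
qed

lemma level_multichain_multichain_level:
  assumes M: "M \<in> multichains interval_le (boundary_intervals n) m"
  shows "level_multichain n m (multichain_level n m M) = M"
proof
  fix j
  show "level_multichain n m (multichain_level n m M) j = M j"
  proof (cases "j < m")
    case True
    then have "fst (M j) \<subseteq> {1..n}" "snd (M j) \<subseteq> {1..n}"
      using boundary_multichainD(1)[OF M] by (auto simp: mem_boundary_intervals)
    then show ?thesis
      using True boundary_multichain_mem_iff[OF M True]
      by (auto simp: level_multichain_def prod_eq_iff)
  next
    case False
    then show ?thesis
      using M by (auto simp: level_multichain_def multichains_def PiE_def extensional_def)
  qed
qed

lemma multichain_level_in_spanning_maps:
  assumes M: "M \<in> multichains interval_le (boundary_intervals n) m" and "0 < m"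
  shows "multichain_level n m M \<in> spanning_maps n m"
proof -
  have card_le: "card {j \<in> {..<m}. P j} \<le> m" for P
    by (rule order_trans[OF card_mono[of "{..<m}"]]) auto
  have last: "M (m - 1) \<in> boundary_intervals n" "m - 1 < m"
    using boundary_multichainD(1)[OF M] \<open>0 < m\<close> by auto
  then obtain x0 x1 where "x0 \<in> fst (M (m - 1))" "x1 \<notin> snd (M (m - 1))"
    "x0 \<in> {1..n}" "x1 \<in> {1..n}"
    by (force simp: mem_boundary_intervals)
  moreover have le: "multichain_level n m M x \<le> 2 * m" if "x \<in> {1..n}" for x
    using that card_le by (simp add: multichain_level_def mult_2 add_mono)
  ultimately have "multichain_level n m M x0 = 0" "multichain_level n m M x1 = 2 * m"
    using boundary_multichain_mem_iff[OF M last(2)] by (auto intro: antisym)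
  moreover have "multichain_level n m M \<in> {1..n} \<rightarrow>\<^sub>E {0..2 * m}"
    using le by (simp add: multichain_level_def restrict_PiE_iff)
  ultimately show ?thesis
    using \<open>x0 \<in> {1..n}\<close> \<open>x1 \<in> {1..n}\<close> unfolding spanning_maps_def by (metis (mono_tags) image_eqI mem_Collect_eq)
qed

lemma multichain_level_level_multichain:
  assumes "g \<in> spanning_maps n m"
  shows "multichain_level n m (level_multichain n m g) = g"
proof
  fix x
  show "multichain_level n m (level_multichain n m g) x = g x"
  proof (cases "x \<in> {1..n}")
    case True
    then have "g x \<le> 2 * m"
      using assms by (auto simp: spanning_maps_def PiE_def Pi_def)
    have "multichain_level n m (level_multichain n m g) x
        = card {j \<in> {..<m}. x \<notin> fst (level_multichain n m g j)}
          + card {j \<in> {..<m}. x \<notin> snd (level_multichain n m g j)}"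
      using True by (simp add: multichain_level_def)
    also have "{j \<in> {..<m}. x \<notin> fst (level_multichain n m g j)} = {m - g x..<m}"
      using True by (auto simp: level_multichain_def)
    also have "{j \<in> {..<m}. x \<notin> snd (level_multichain n m g j)} = {..<g x - m}"
      using True \<open>g x \<le> 2 * m\<close> by (auto simp: level_multichain_def)
    finally show ?thesis
      using \<open>g x \<le> 2 * m\<close> by simp
  next
    case False
    then show ?thesis
      using assms by (auto simp: multichain_level_def spanning_maps_def PiE_def extensional_def)
  qed
qed

lemma level_multichain_in_multichains:
  assumes "g \<in> spanning_maps n m"
  shows "level_multichain n m g \<in> multichains interval_le (boundary_intervals n) m"
proof -
  obtain x0 x1 where "x0 \<in> {1..n}" "g x0 = 0" "x1 \<in> {1..n}" "g x1 = 2 * m"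
    using assms by (auto simp: spanning_maps_def)
  have "level_multichain n m g j \<in> boundary_intervals n" if "j < m" for j
  proof -
    let ?F = "{x \<in> {1..n}. g x + j < m}" and ?S = "{x \<in> {1..n}. g x \<le> m + j}"
    have "x0 \<in> ?F" "x1 \<notin> ?S"
      using \<open>x0 \<in> {1..n}\<close> \<open>g x0 = 0\<close> \<open>g x1 = 2 * m\<close> that by auto
    then have "?F \<noteq> {}" "?S \<noteq> {1..n}"
      using \<open>x1 \<in> {1..n}\<close> by blast+
    moreover have "?F \<subseteq> ?S" "?S \<subseteq> {1..n}"
      by auto
    moreover have "level_multichain n m g j = (?F, ?S)"
      using that by (simp add: level_multichain_def)
    ultimately show ?thesis
      by (simp add: mem_boundary_intervals)
  qed
  then have "level_multichain n m g \<in> {..<m} \<rightarrow>\<^sub>E boundary_intervals n"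
    by (simp add: PiE_iff level_multichain_def)
  moreover have "monotone_on {..<m} (\<le>) interval_le (level_multichain n m g)"
    by (rule monotone_onI) (auto simp: level_multichain_def interval_le_def)
  ultimately show ?thesis
    by (simp add: multichains_def)
qed

lemma card_boundary_multichains:
  assumes "0 < m"
  shows "int (card (multichains interval_le (boundary_intervals n) m))
    = (2 * int m + 1) ^ n - 2 * (2 * int m) ^ n + (2 * int m - 1) ^ n"
proof -
  have "bij_betw (multichain_level n m) (multichains interval_le (boundary_intervals n) m) (spanning_maps n m)"
    by (rule bij_betwI[where g = "level_multichain n m"])
       (auto simp: assms multichain_level_in_spanning_maps level_multichain_in_multichains
                   level_multichain_multichain_level multichain_level_level_multichain)
  then have "card (multichains interval_le (boundary_intervals n) m) = card (spanning_maps n m)"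
    by (rule bij_betw_same_card)
  also have "int \<dots> = (2 * int m + 1) ^ n - 2 * (2 * int m) ^ n + (2 * int m - 1) ^ n"
    using card_PiE_hitting_two[of "{1..n}" "{0..2 * m}" 0 "2 * m"] assms
    by (simp add: spanning_maps_def algebra_simps)
  finally show ?thesis .
qed

section \<open>Signed permutations and insertion of the largest letter\<close>

lemma signed_perms_outside: "\<sigma> \<in> signed_perms n \<Longrightarrow> i \<notin> {1..n} \<Longrightarrow> \<sigma> i = 0"
  by (simp add: signed_perms_def)

lemma signed_perms_abs_bij: "\<sigma> \<in> signed_perms n \<Longrightarrow> bij_betw (\<lambda>i. nat \<bar>\<sigma> i\<bar>) {1..n} {1..n}"
  by (simp add: signed_perms_def)

lemma signed_perms_abs_le:
  assumes "\<sigma> \<in> signed_perms n"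
  shows "\<bar>\<sigma> i\<bar> \<le> int n"
proof (cases "i \<in> {1..n}")
  case True
  then have "nat \<bar>\<sigma> i\<bar> \<in> {1..n}"
    using signed_perms_abs_bij[OF assms] by (auto dest: bij_betwE)
  then show ?thesis by auto
qed (simp add: signed_perms_outside[OF assms])

lemma signed_perms_nonzero:
  assumes "\<sigma> \<in> signed_perms n" "i \<in> {1..n}"
  shows "\<sigma> i \<noteq> 0"
  using signed_perms_abs_bij[OF assms(1)] assms(2) by (fastforce dest: bij_betwE)

lemma finite_signed_perms: "finite (signed_perms n)"
proof -
  have "inj_on (\<lambda>\<sigma>. restrict \<sigma> {1..n}) (signed_perms n)"
    by (rule inj_onI) (metis restrict_apply signed_perms_outside ext)
  moreover have "(\<lambda>\<sigma>. restrict \<sigma> {1..n}) ` signed_perms n \<subseteq> {1..n} \<rightarrow>\<^sub>E {-int n..int n}"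
    using signed_perms_abs_le by (force simp: abs_le_iff)
  ultimately show ?thesis
    by (metis finite_PiE finite_atLeastAtMost finite_atLeastAtMost_int finite_imageD finite_subset)
qed

lemma signed_perms_0: "signed_perms 0 = {\<lambda>_. 0}"
  by (auto simp: signed_perms_def bij_betw_def)

definition insert_at :: "(nat \<Rightarrow> 'a) \<Rightarrow> nat \<Rightarrow> 'a \<Rightarrow> nat \<Rightarrow> 'a" where
  "insert_at f p v i = (if i < p then f i else if i = p then v else f (i - 1))"

definition delete_at :: "(nat \<Rightarrow> 'a) \<Rightarrow> nat \<Rightarrow> nat \<Rightarrow> 'a" where
  "delete_at f p i = (if i < p then f i else f (Suc i))"

lemma delete_at_insert_at [simp]: "delete_at (insert_at f p v) p = f"
  by (auto simp: delete_at_def insert_at_def fun_eq_iff)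

lemma insert_at_delete_at: "0 < p \<Longrightarrow> insert_at (delete_at f p) p (f p) = f"
  by (auto simp: delete_at_def insert_at_def fun_eq_iff)

lemma bij_betw_insert_at:
  assumes f: "bij_betw f {1..m} {1..m}" and p: "p \<in> {1..Suc m}"
  shows "bij_betw (insert_at f p (Suc m)) {1..Suc m} {1..Suc m}"
proof -
  have "insert_at f p (Suc m) ` {1..Suc m} = {1..Suc m}"
  proof (intro equalityI subsetI)
    fix y assume "y \<in> insert_at f p (Suc m) ` {1..Suc m}"
    then obtain i where i: "i \<in> {1..Suc m}" "y = insert_at f p (Suc m) i"
      by blast
    then have "i < p \<Longrightarrow> i \<in> {1..m}" "p < i \<Longrightarrow> i - 1 \<in> {1..m}"
      using p by auto
    then show "y \<in> {1..Suc m}"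
      using i bij_betw_apply[OF f, of i] bij_betw_apply[OF f, of "i - 1"] by (auto simp: insert_at_def)
  next
    fix y assume y: "y \<in> {1..Suc m}"
    show "y \<in> insert_at f p (Suc m) ` {1..Suc m}"
    proof (cases "y = Suc m")
      case True
      then show ?thesis
        using p by (intro image_eqI[of y _ p]) (auto simp: insert_at_def)
    next
      case False
      with y have "y \<in> f ` {1..m}"
        using bij_betw_imp_surj_on[OF f] by auto
      then obtain j where j: "j \<in> {1..m}" "y = f j"
        by blast
      show ?thesis
      proof (cases "j < p")
        case True
        with j show ?thesis by (intro image_eqI[of y _ j]) (auto simp: insert_at_def)
      next
        case False
        with j show ?thesis by (intro image_eqI[of y _ "Suc j"]) (auto simp: insert_at_def)
      qed
    qed
  qed
  then show ?thesis
    by (simp add: bij_betw_def finite_surj_inj)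
qed

lemma bij_betw_delete_at:
  assumes f: "bij_betw f {1..Suc m} {1..Suc m}" and p: "p \<in> {1..Suc m}" "f p = Suc m"
  shows "bij_betw (delete_at f p) {1..m} {1..m}"
proof -
  have f_eq: "f i = Suc m \<longleftrightarrow> i = p" if "i \<in> {1..Suc m}" for i
    using p that inj_onD[OF bij_betw_imp_inj_on[OF f], of i p] by auto
  have "delete_at f p ` {1..m} = {1..m}"
  proof (intro equalityI subsetI)
    fix y assume "y \<in> delete_at f p ` {1..m}"
    then obtain i where i: "i \<in> {1..m}" "y = delete_at f p i"
      by blast
    define j where "j = (if i < p then i else Suc i)"
    have j: "j \<in> {1..Suc m}" "j \<noteq> p" "y = f j"
      using i p by (auto simp: j_def delete_at_def)
    have "f j \<in> {1..Suc m}" "f j \<noteq> Suc m"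
      using bij_betw_apply[OF f j(1)] f_eq[OF j(1)] j(2) by auto
    then show "y \<in> {1..m}"
      using j(3) by auto
  next
    fix y assume y: "y \<in> {1..m}"
    then have "y \<in> f ` {1..Suc m}"
      using bij_betw_imp_surj_on[OF f] by auto
    then obtain j where j: "j \<in> {1..Suc m}" "y = f j"
      by blast
    with y p(2) have "j \<noteq> p" by auto
    show "y \<in> delete_at f p ` {1..m}"
    proof (cases "j < p")
      case True
      with j p show ?thesis by (intro image_eqI[of y _ j]) (auto simp: delete_at_def)
    next
      case False
      with j p \<open>j \<noteq> p\<close> show ?thesis by (intro image_eqI[of y _ "j - 1"]) (auto simp: delete_at_def)
    qed
  qed
  then show ?thesis
    by (simp add: bij_betw_def finite_surj_inj)
qed

lemma insert_at_in_signed_perms: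
  assumes \<tau>: "\<tau> \<in> signed_perms m" and p: "p \<in> {1..Suc m}" and v: "\<bar>v\<bar> = int (Suc m)"
  shows "insert_at \<tau> p v \<in> signed_perms (Suc m)"
proof -
  have "(\<lambda>i. nat \<bar>insert_at \<tau> p v i\<bar>) = insert_at (\<lambda>i. nat \<bar>\<tau> i\<bar>) p (Suc m)"
    using v by (auto simp: insert_at_def fun_eq_iff)
  then have "bij_betw (\<lambda>i. nat \<bar>insert_at \<tau> p v i\<bar>) {1..Suc m} {1..Suc m}"
    using bij_betw_insert_at[OF signed_perms_abs_bij[OF \<tau>] p] by simp
  moreover have "insert_at \<tau> p v i = 0" if "i \<notin> {1..Suc m}" for i
  proof -
    from that consider "i = 0" | "Suc m < i" by fastforce
    then show ?thesis
    proof cases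
      case 1
      then show ?thesis using p signed_perms_outside[OF \<tau>, of 0] by (simp add: insert_at_def)
    next
      case 2
      then have "i - 1 \<notin> {1..m}" "\<not> i < p" "i \<noteq> p" using p by auto
      then show ?thesis using signed_perms_outside[OF \<tau>] by (simp add: insert_at_def)
    qed
  qed
  ultimately show ?thesis
    by (simp add: signed_perms_def)
qed

lemma delete_at_in_signed_perms:
  assumes \<sigma>: "\<sigma> \<in> signed_perms (Suc m)" and p: "p \<in> {1..Suc m}" "\<bar>\<sigma> p\<bar> = int (Suc m)"
  shows "delete_at \<sigma> p \<in> signed_perms m"
proof -
  have "(\<lambda>i. nat \<bar>delete_at \<sigma> p i\<bar>) = delete_at (\<lambda>i. nat \<bar>\<sigma> i\<bar>) p"
    by (auto simp: delete_at_def)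
  then have "bij_betw (\<lambda>i. nat \<bar>delete_at \<sigma> p i\<bar>) {1..m} {1..m}"
    using bij_betw_delete_at[OF signed_perms_abs_bij[OF \<sigma>] p(1)] p(2) by simp
  moreover have "delete_at \<sigma> p i = 0" if "i \<notin> {1..m}" for i
  proof -
    from that consider "i = 0" | "m < i" by fastforce
    then show ?thesis
    proof cases
      case 1
      then show ?thesis using p signed_perms_outside[OF \<sigma>, of 0] by (simp add: delete_at_def)
    next
      case 2
      then have "Suc i \<notin> {1..Suc m}" "\<not> i < p" using p by auto
      then show ?thesis using signed_perms_outside[OF \<sigma>] by (simp add: delete_at_def)
    qed
  qed
  ultimately show ?thesis
    by (simp add: signed_perms_def)
qed

lemma abs_insert_max_eq_iff:
  assumes "\<tau> \<in> signed_perms m" "s \<in> {1, -1}"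
  shows "\<bar>insert_at \<tau> p (s * int (Suc m)) i\<bar> = int (Suc m) \<longleftrightarrow> i = p"
  using assms signed_perms_abs_le[OF assms(1), of i] signed_perms_abs_le[OF assms(1), of "i - 1"]
  by (auto simp: insert_at_def abs_mult)

lemma inj_on_insert_max:
  "inj_on (\<lambda>(\<tau>, p, s). insert_at \<tau> p (s * int (Suc m))) (signed_perms m \<times> {1..Suc m} \<times> {1, -1})"
proof (rule inj_onI)
  fix x y
  assume x: "x \<in> signed_perms m \<times> {1..Suc m} \<times> {1, -1}" and y: "y \<in> signed_perms m \<times> {1..Suc m} \<times> {1, -1}"
    and xy_eq: "(\<lambda>(\<tau>, p, s). insert_at \<tau> p (s * int (Suc m))) x = (\<lambda>(\<tau>, p, s). insert_at \<tau> p (s * int (Suc m))) y"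
  obtain \<tau> p s \<tau>' p' s' where xy: "x = (\<tau>, p, s)" "y = (\<tau>', p', s')"
    by (cases x, cases y) auto
  with x y have dom: "\<tau> \<in> signed_perms m" "s \<in> {1, -1}" "\<tau>' \<in> signed_perms m" "s' \<in> {1, -1}"
    by auto
  from xy_eq xy have eq: "insert_at \<tau> p (s * int (Suc m)) = insert_at \<tau>' p' (s' * int (Suc m))"
    by simp
  have "p = p'"
    using abs_insert_max_eq_iff[OF dom(1,2), of p p] abs_insert_max_eq_iff[OF dom(3,4), of p' p] eq by simp
  moreover have "s = s'"
    using fun_cong[OF eq, of p] \<open>p = p'\<close> by (simp add: insert_at_def)
  moreover have "\<tau> = \<tau>'"
    using arg_cong[OF eq, of "\<lambda>f. delete_at f p"] \<open>p = p'\<close> by simp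
  ultimately show "x = y"
    using xy by simp
qed

lemma signed_perms_Suc_eq_image:
  "(\<lambda>(\<tau>, p, s). insert_at \<tau> p (s * int (Suc m))) ` (signed_perms m \<times> {1..Suc m} \<times> {1, -1})
    = signed_perms (Suc m)"
proof (intro equalityI subsetI)
  fix \<sigma> assume "\<sigma> \<in> (\<lambda>(\<tau>, p, s). insert_at \<tau> p (s * int (Suc m))) ` (signed_perms m \<times> {1..Suc m} \<times> {1, -1})"
  then show "\<sigma> \<in> signed_perms (Suc m)"
    by (auto intro!: insert_at_in_signed_perms)
next
  fix \<sigma> assume \<sigma>: "\<sigma> \<in> signed_perms (Suc m)"
  have "Suc m \<in> (\<lambda>i. nat \<bar>\<sigma> i\<bar>) ` {1..Suc m}"
    using bij_betw_imp_surj_on[OF signed_perms_abs_bij[OF \<sigma>]] by simp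
  then obtain p where p: "p \<in> {1..Suc m}" "Suc m = nat \<bar>\<sigma> p\<bar>"
    by (rule imageE)
  then have abs_p: "\<bar>\<sigma> p\<bar> = int (Suc m)" by linarith
  then have "\<sigma> p = sgn (\<sigma> p) * int (Suc m)" "sgn (\<sigma> p) \<in> {1, -1}"
    by (auto simp: sgn_if abs_if split: if_splits)
  then show "\<sigma> \<in> (\<lambda>(\<tau>, p, s). insert_at \<tau> p (s * int (Suc m))) ` (signed_perms m \<times> {1..Suc m} \<times> {1, -1})"
    using delete_at_in_signed_perms[OF \<sigma> p(1) abs_p] insert_at_delete_at[of p \<sigma>] p(1)
    by (intro image_eqI[of _ _ "(delete_at \<sigma> p, p, sgn (\<sigma> p))"]) auto
qed

lemma sum_signed_perms_Suc:
  "(\<Sum>\<sigma>\<in>signed_perms (Suc m). F \<sigma>)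
    = (\<Sum>\<tau>\<in>signed_perms m. \<Sum>p\<in>{1..Suc m}. \<Sum>s\<in>{1, -1}. F (insert_at \<tau> p (s * int (Suc m))))"
proof -
  let ?ins = "\<lambda>(\<tau>, p, s). insert_at \<tau> p (s * int (Suc m))"
  have "(\<Sum>\<sigma>\<in>signed_perms (Suc m). F \<sigma>) = (\<Sum>x\<in>signed_perms m \<times> {1..Suc m} \<times> {1, -1}. F (?ins x))"
    by (rule sum.reindex_bij_betw[OF bij_betw_imageI[OF inj_on_insert_max signed_perms_Suc_eq_image], symmetric])
  also have "\<dots> = (\<Sum>\<tau>\<in>signed_perms m. \<Sum>x\<in>{1..Suc m} \<times> {1, -1}. F (?ins (\<tau>, x)))"
    by (subst sum.cartesian_product) (simp add: split_def)
  also have "\<dots> = (\<Sum>\<tau>\<in>signed_perms m. \<Sum>p\<in>{1..Suc m}. \<Sum>s\<in>{1, -1}. F (insert_at \<tau> p (s * int (Suc m))))"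
    by (rule sum.cong[OF refl], subst sum.cartesian_product) (simp add: split_def)
  finally show ?thesis .
qed

section \<open>Descents of the padded word\<close>

definition desc_at :: "(nat \<Rightarrow> int) \<Rightarrow> nat \<Rightarrow> nat" where
  "desc_at \<sigma> i = of_bool (\<sigma> (Suc i) < \<sigma> i)"

(* A signed permutation vanishes at 0 and n + 1, so this counts the descents of the word
   0 s_1 ... s_n 0. *)

definition des_padded :: "nat \<Rightarrow> (nat \<Rightarrow> int) \<Rightarrow> nat" where
  "des_padded n \<sigma> = (\<Sum>i\<le>n. desc_at \<sigma> i)"

lemma sum_lessThan_add: "(\<Sum>i<a + b. f i) = (\<Sum>i<a. f i) + (\<Sum>i<b. f (a + (i :: nat)))"
  by (induction b) (simp_all add: add.assoc)

lemma des_padded_insert_at: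
  assumes v: "\<And>j. \<bar>\<tau> j\<bar> < \<bar>v\<bar>" and p: "p \<in> {1..Suc m}"
  shows "des_padded (Suc m) (insert_at \<tau> p v) + desc_at \<tau> (p - 1) = des_padded m \<tau> + 1"
proof -
  let ?\<sigma> = "insert_at \<tau> p v"
  define k where "k = p - 1"
  define r where "r = m - k"
  have k: "p = Suc k" and r: "m = k + r"
    using p by (simp_all add: k_def r_def)
  have before: "(\<Sum>i<k. desc_at ?\<sigma> i) = (\<Sum>i<k. desc_at \<tau> i)"
    by (rule sum.cong) (auto simp: desc_at_def insert_at_def k)
  have after: "(\<Sum>i<r. desc_at ?\<sigma> (k + Suc (Suc i))) = (\<Sum>i<r. desc_at \<tau> (k + Suc i))"
    by (rule sum.cong) (auto simp: desc_at_def insert_at_def k)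
  have "?\<sigma> k = \<tau> k" "?\<sigma> (Suc k) = v" "?\<sigma> (Suc (Suc k)) = \<tau> (Suc k)"
    by (simp_all add: insert_at_def k)
  then have around_v: "desc_at ?\<sigma> k + desc_at ?\<sigma> (Suc k) = 1"
    using v[of k] v[of "Suc k"] by (cases "0 \<le> v") (simp_all add: desc_at_def abs_less_iff)
  have "des_padded (Suc m) ?\<sigma> = (\<Sum>i<k + Suc (Suc r). desc_at ?\<sigma> i)"
    by (simp add: des_padded_def r lessThan_Suc_atMost[symmetric])
  also have "\<dots> = (\<Sum>i<k. desc_at ?\<sigma> i) + (desc_at ?\<sigma> k + desc_at ?\<sigma> (Suc k))
      + (\<Sum>i<r. desc_at ?\<sigma> (k + Suc (Suc i)))"
    unfolding sum_lessThan_add sum.lessThan_Suc_shift by simp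
  finally have "des_padded (Suc m) ?\<sigma> = (\<Sum>i<k. desc_at \<tau> i) + 1 + (\<Sum>i<r. desc_at \<tau> (k + Suc i))"
    using before after around_v by simp
  moreover have "des_padded m \<tau> = (\<Sum>i<k + Suc r. desc_at \<tau> i)"
    by (simp add: des_padded_def r lessThan_Suc_atMost[symmetric])
  moreover have "\<dots> = (\<Sum>i<k. desc_at \<tau> i) + desc_at \<tau> k + (\<Sum>i<r. desc_at \<tau> (k + Suc i))"
    unfolding sum_lessThan_add sum.lessThan_Suc_shift by simp
  ultimately show ?thesis
    using k by simp
qed

lemma des_padded_insert_max:
  assumes \<tau>: "\<tau> \<in> signed_perms m" and "p \<in> {1..Suc m}" "s \<in> {1, -1}"
  shows "des_padded (Suc m) (insert_at \<tau> p (s * int (Suc m))) = des_padded m \<tau> + 1 - desc_at \<tau> (p - 1)"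
proof -
  have "\<bar>\<tau> j\<bar> < \<bar>s * int (Suc m)\<bar>" for j
    using signed_perms_abs_le[OF \<tau>, of j] assms(3) by auto
  from des_padded_insert_at[of \<tau> "s * int (Suc m)", OF this assms(2)] show ?thesis
    by simp
qed

lemma des_padded_split_ends:
  "des_padded (Suc k) \<tau> = desc_at \<tau> 0 + (\<Sum>i<k. desc_at \<tau> (Suc i)) + desc_at \<tau> (Suc k)"
  unfolding des_padded_def lessThan_Suc_atMost[symmetric]
  by (subst sum.lessThan_Suc_shift) simp

lemma des_padded_eq_Suc_desB:
  assumes "\<sigma> \<in> signed_perms n" "0 < \<sigma> n"
  shows "des_padded n \<sigma> = Suc (desB n \<sigma>)"
proof -
  have "\<sigma> (Suc n) = 0"
    using signed_perms_outside[OF assms(1)] by simp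
  then have "desc_at \<sigma> n = 1"
    using assms(2) by (simp add: desc_at_def)
  moreover have "(\<Sum>i<n. desc_at \<sigma> i) = card ({..<n} \<inter> {i. \<sigma> (Suc i) < \<sigma> i})"
    unfolding desc_at_def by simp
  moreover have "{..<n} \<inter> {i. \<sigma> (Suc i) < \<sigma> i} = {i \<in> {0..<n}. \<sigma> i > \<sigma> (Suc i)}"
    by auto
  ultimately show ?thesis
    by (simp add: des_padded_def desB_def lessThan_Suc_atMost[symmetric])
qed

section \<open>A recurrence for the descent series refined by end signs\<close>

definition has_sign :: "bool \<Rightarrow> int \<Rightarrow> bool" where
  "has_sign pos x \<longleftrightarrow> (if pos then 0 < x else x < 0)"

definition des_weight :: "nat \<Rightarrow> bool \<Rightarrow> bool \<Rightarrow> (nat \<Rightarrow> int) \<Rightarrow> int fps" where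
  "des_weight n e d \<sigma> = (if has_sign e (\<sigma> 1) \<and> has_sign d (\<sigma> n) then fps_X ^ des_padded n \<sigma> else 0)"

definition des_series :: "nat \<Rightarrow> bool \<Rightarrow> bool \<Rightarrow> int fps" where
  "des_series n e d = (\<Sum>\<sigma>\<in>signed_perms n. des_weight n e d \<sigma>)"

(* A negative first entry forces a descent at position 0, a positive last entry one at position n. *)

definition forced_des :: "bool \<Rightarrow> bool \<Rightarrow> int" where
  "forced_des e d = of_bool (\<not> e) + of_bool d"

(* The effect of inserting +-(k + 2) into the signed permutations of [k + 1]: the first four terms
   come from the two end positions, where the new entry becomes the first or the last one; the last
   term comes from the k interior positions, where the number of descents grows by one exactly when
   the insertion splits an ascent. *)

definition insertion_op :: "nat \<Rightarrow> (bool \<Rightarrow> bool \<Rightarrow> int fps) \<Rightarrow> bool \<Rightarrow> bool \<Rightarrow> int fps" where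
  "insertion_op k G e d = fps_X * G True d + G False d + G e True + fps_X * G e False
     + 2 * (fps_X * (1 - fps_X) * fps_deriv (G e d)
            + (of_int (int k + forced_des e d) * fps_X - of_int (forced_des e d)) * G e d)"

lemma sum_sign_choice:
  "0 < M \<Longrightarrow> (\<Sum>s\<in>{1, -1}. if has_sign e (s * M) \<and> P then x else 0) = (if P then x else 0)"
  by (cases e) (auto simp: has_sign_def)

lemma sum_atLeast1_atMost_Suc_Suc:
  "(\<Sum>p\<in>{1..Suc (Suc k)}. g p) = g 1 + g (Suc (Suc k)) + (\<Sum>i<k. g (Suc (Suc i)))"
proof -
  have "(\<Sum>p\<in>{1..Suc (Suc k)}. g p) = (\<Sum>i<Suc (Suc k). g (Suc i))"
    using sum.atLeast1_atMost_eq[of g "Suc (Suc k)"] by simp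
  also have "\<dots> = g 1 + (\<Sum>i<Suc k. g (Suc (Suc i)))"
    by (subst sum.lessThan_Suc_shift) simp
  also have "\<dots> = g 1 + g (Suc (Suc k)) + (\<Sum>i<k. g (Suc (Suc i)))"
    by (simp add: ac_simps)
  finally show ?thesis .
qed

lemma sum_X_power_Suc_minus:
  assumes "\<And>i. f i \<le> 1"
  shows "(\<Sum>i<k. fps_X ^ (D + 1 - f i) :: int fps)
    = of_nat (\<Sum>i<k. f i) * fps_X ^ D + of_int (int k - int (\<Sum>i<k. f i)) * fps_X ^ (D + 1)"
proof (induction k)
  case (Suc k)
  have "f k = 0 \<or> f k = 1" using assms[of k] by auto
  then show ?case using Suc by (auto simp: algebra_simps of_nat_diff)
qed simp

lemma fps_X_mult_deriv_X_power: "fps_X * fps_deriv (fps_X ^ n :: int fps) = of_nat n * fps_X ^ n"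
proof -
  have "fps_nth (fps_X * fps_deriv (fps_X ^ n :: int fps)) j = fps_nth (of_nat n * fps_X ^ n :: int fps) j" for j
    by (cases j) (simp_all add: fps_of_nat[symmetric] fps_X_power_nth fps_deriv_nth)
  then show ?thesis
    by (simp add: fps_eq_iff)
qed

lemma sum_signs_des_weight_insert_max:
  fixes e d :: bool
  assumes \<tau>: "\<tau> \<in> signed_perms (Suc k)"
  defines "w \<equiv> \<lambda>p s. des_weight (Suc (Suc k)) e d (insert_at \<tau> p (s * int (Suc (Suc k))))"
    and "D \<equiv> des_padded (Suc k) \<tau>"
  shows "(\<Sum>s\<in>{1, -1}. w 1 s) = (if has_sign d (\<tau> (Suc k)) then fps_X ^ (D + 1 - desc_at \<tau> 0) else 0)"
    and "(\<Sum>s\<in>{1, -1}. w (Suc (Suc k)) s)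
      = (if has_sign e (\<tau> 1) then fps_X ^ (D + 1 - desc_at \<tau> (Suc k)) else 0)"
    and "i < k \<Longrightarrow> (\<Sum>s\<in>{1, -1}. w (Suc (Suc i)) s)
      = 2 * (if has_sign e (\<tau> 1) \<and> has_sign d (\<tau> (Suc k)) then fps_X ^ (D + 1 - desc_at \<tau> (Suc i)) else 0)"
proof -
  note des = des_padded_insert_max[OF \<tau>, folded D_def]
  have "(\<Sum>s\<in>{1, -1}. w 1 s) = (\<Sum>s\<in>{1, -1}.
      if has_sign e (s * int (Suc (Suc k))) \<and> has_sign d (\<tau> (Suc k)) then fps_X ^ (D + 1 - desc_at \<tau> 0) else 0)"
    using des[of 1] by (intro sum.cong) (auto simp: w_def des_weight_def insert_at_def)
  then show "(\<Sum>s\<in>{1, -1}. w 1 s) = (if has_sign d (\<tau> (Suc k)) then fps_X ^ (D + 1 - desc_at \<tau> 0) else 0)"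
    by (simp only: sum_sign_choice of_nat_0_less_iff zero_less_Suc)
  have "(\<Sum>s\<in>{1, -1}. w (Suc (Suc k)) s) = (\<Sum>s\<in>{1, -1}.
      if has_sign d (s * int (Suc (Suc k))) \<and> has_sign e (\<tau> 1) then fps_X ^ (D + 1 - desc_at \<tau> (Suc k)) else 0)"
    using des[of "Suc (Suc k)"] by (intro sum.cong) (auto simp: w_def des_weight_def insert_at_def)
  then show "(\<Sum>s\<in>{1, -1}. w (Suc (Suc k)) s)
      = (if has_sign e (\<tau> 1) then fps_X ^ (D + 1 - desc_at \<tau> (Suc k)) else 0)"
    by (simp only: sum_sign_choice of_nat_0_less_iff zero_less_Suc)
  assume "i < k"
  then have "(\<Sum>s\<in>{1, -1}. w (Suc (Suc i)) s) = (\<Sum>s\<in>{1 :: int, -1}.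
      if has_sign e (\<tau> 1) \<and> has_sign d (\<tau> (Suc k)) then fps_X ^ (D + 1 - desc_at \<tau> (Suc i)) else 0)"
    using des[of "Suc (Suc i)"] by (intro sum.cong) (auto simp: w_def des_weight_def insert_at_def)
  then show "(\<Sum>s\<in>{1, -1}. w (Suc (Suc i)) s)
      = 2 * (if has_sign e (\<tau> 1) \<and> has_sign d (\<tau> (Suc k)) then fps_X ^ (D + 1 - desc_at \<tau> (Suc i)) else 0)"
    by simp
qed

lemma sum_des_weight_insert_max_explicit:
  fixes e d :: bool
  assumes \<tau>: "\<tau> \<in> signed_perms (Suc k)"
  defines "a \<equiv> \<tau> 1" and "b \<equiv> \<tau> (Suc k)" and "D \<equiv> des_padded (Suc k) \<tau>"
    and "S \<equiv> \<Sum>i<k. desc_at \<tau> (Suc i)"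
  shows "(\<Sum>p\<in>{1..Suc (Suc k)}. \<Sum>s\<in>{1, -1}.
            des_weight (Suc (Suc k)) e d (insert_at \<tau> p (s * int (Suc (Suc k)))))
    = (if has_sign d b then fps_X ^ (D + 1 - desc_at \<tau> 0) else 0)
      + (if has_sign e a then fps_X ^ (D + 1 - desc_at \<tau> (Suc k)) else 0)
      + (if has_sign e a \<and> has_sign d b
         then 2 * (of_nat S * fps_X ^ D + of_int (int k - int S) * fps_X ^ (D + 1)) else 0)"
proof -
  note sums = sum_signs_des_weight_insert_max[OF \<tau>, where e = e and d = d, folded a_def b_def D_def]
  have inner: "(\<Sum>i<k. \<Sum>s\<in>{1, -1}. des_weight (Suc (Suc k)) e d (insert_at \<tau> (Suc (Suc i)) (s * int (Suc (Suc k)))))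
      = (\<Sum>i<k. 2 * (if has_sign e a \<and> has_sign d b then fps_X ^ (D + 1 - desc_at \<tau> (Suc i)) else 0))"
  proof (rule sum.cong[OF refl])
    fix i assume "i \<in> {..<k}"
    then show "(\<Sum>s\<in>{1, -1}. des_weight (Suc (Suc k)) e d (insert_at \<tau> (Suc (Suc i)) (s * int (Suc (Suc k)))))
        = 2 * (if has_sign e a \<and> has_sign d b then fps_X ^ (D + 1 - desc_at \<tau> (Suc i)) else 0)"
      by (intro sums(3)) simp
  qed
  have interior: "(\<Sum>i<k. 2 * (if has_sign e a \<and> has_sign d b then fps_X ^ (D + 1 - desc_at \<tau> (Suc i)) else 0))
      = (if has_sign e a \<and> has_sign d b
         then 2 * (of_nat S * fps_X ^ D + of_int (int k - int S) * fps_X ^ (D + 1)) else (0 :: int fps))"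
  proof (cases "has_sign e a \<and> has_sign d b")
    case True
    have "(\<Sum>i<k. fps_X ^ (D + 1 - desc_at \<tau> (Suc i)) :: int fps)
        = of_nat S * fps_X ^ D + of_int (int k - int S) * fps_X ^ (D + 1)"
      unfolding S_def by (rule sum_X_power_Suc_minus) (simp add: desc_at_def)
    with True show ?thesis
      by (simp add: sum_distrib_left[symmetric])
  next
    case False
    show ?thesis
      by (simp only: if_not_P[OF False] mult_zero_right sum.neutral_const)
  qed
  show ?thesis
    unfolding sum_atLeast1_atMost_Suc_Suc sums(1,2) inner interior ..
qed

lemma sum_des_weight_insert_max:
  assumes \<tau>: "\<tau> \<in> signed_perms (Suc k)"
  shows "(\<Sum>p\<in>{1..Suc (Suc k)}. \<Sum>s\<in>{1, -1}.
            des_weight (Suc (Suc k)) e d (insert_at \<tau> p (s * int (Suc (Suc k)))))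
       = insertion_op k (\<lambda>e d. des_weight (Suc k) e d \<tau>) e d"
    (is "?L = ?R")
proof -
  define a where "a = \<tau> 1"
  define b where "b = \<tau> (Suc k)"
  define D where "D = des_padded (Suc k) \<tau>"
  define S where "S = (\<Sum>i<k. desc_at \<tau> (Suc i))"
  have L: "?L = (if has_sign d b then fps_X ^ (D + 1 - desc_at \<tau> 0) else 0)
      + (if has_sign e a then fps_X ^ (D + 1 - desc_at \<tau> (Suc k)) else 0)
      + (if has_sign e a \<and> has_sign d b
         then 2 * (of_nat S * fps_X ^ D + of_int (int k - int S) * fps_X ^ (D + 1)) else 0)"
    unfolding a_def b_def D_def S_def by (rule sum_des_weight_insert_max_explicit[OF \<tau>])
  have weight: "des_weight (Suc k) e' d' \<tau> = (if has_sign e' a \<and> has_sign d' b then fps_X ^ D else 0)" for e' d'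
    by (simp add: des_weight_def a_def b_def D_def)
  have deriv: "fps_X * (1 - fps_X) * fps_deriv (fps_X ^ D) = (1 - fps_X) * (of_nat D * fps_X ^ D :: int fps)"
    unfolding mult.commute[of fps_X "1 - fps_X"] mult.assoc fps_X_mult_deriv_X_power ..
  have R: "?R = fps_X * (if has_sign True a \<and> has_sign d b then fps_X ^ D else 0)
      + (if has_sign False a \<and> has_sign d b then fps_X ^ D else 0)
      + (if has_sign e a \<and> has_sign True b then fps_X ^ D else 0)
      + fps_X * (if has_sign e a \<and> has_sign False b then fps_X ^ D else 0)
      + (if has_sign e a \<and> has_sign d b then 2 * ((1 - fps_X) * (of_nat D * fps_X ^ D)
           + (of_int (int k + forced_des e d) * fps_X - of_int (forced_des e d)) * fps_X ^ D) else 0)"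
    unfolding insertion_op_def weight
    using deriv by (cases "has_sign e a"; cases "has_sign d b") simp_all
  have "a \<noteq> 0" "b \<noteq> 0"
    using signed_perms_nonzero[OF \<tau>] by (auto simp: a_def b_def)
  have "desc_at \<tau> 0 = of_bool (a < 0)" "desc_at \<tau> (Suc k) = of_bool (0 < b)"
    using signed_perms_outside[OF \<tau>, of 0] signed_perms_outside[OF \<tau>, of "Suc (Suc k)"]
    by (simp_all add: desc_at_def a_def b_def)
  moreover have "D = desc_at \<tau> 0 + S + desc_at \<tau> (Suc k)"
    unfolding D_def S_def by (rule des_padded_split_ends)
  ultimately show ?thesis
    unfolding L R using \<open>a \<noteq> 0\<close> \<open>b \<noteq> 0\<close>
    by (cases e; cases d; cases "0 < a"; cases "0 < b")
       (auto simp: has_sign_def forced_des_def algebra_simps)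
qed

lemma insertion_op_sum:
  "insertion_op k (\<lambda>e d. \<Sum>x\<in>A. G x e d) e d = (\<Sum>x\<in>A. insertion_op k (G x) e d)"
  by (simp add: insertion_op_def sum.distrib sum_distrib_left sum_distrib_right fps_deriv_sum)

lemma des_series_Suc_Suc:
  "des_series (Suc (Suc k)) e d = insertion_op k (des_series (Suc k)) e d"
proof -
  have "des_series (Suc (Suc k)) e d = (\<Sum>\<tau>\<in>signed_perms (Suc k). \<Sum>p\<in>{1..Suc (Suc k)}. \<Sum>s\<in>{1, -1}.
          des_weight (Suc (Suc k)) e d (insert_at \<tau> p (s * int (Suc (Suc k)))))"
    unfolding des_series_def by (rule sum_signed_perms_Suc)
  also have "\<dots> = (\<Sum>\<tau>\<in>signed_perms (Suc k). insertion_op k (\<lambda>e d. des_weight (Suc k) e d \<tau>) e d)"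
    by (rule sum.cong[OF refl]) (rule sum_des_weight_insert_max)
  also have "\<dots> = insertion_op k (des_series (Suc k)) e d"
    unfolding des_series_def by (rule insertion_op_sum[symmetric])
  finally show ?thesis .
qed

section \<open>Closed form of the refined descent series\<close>

definition shifted_power :: "nat \<Rightarrow> int \<Rightarrow> int" where
  "shifted_power n j = (if j < 0 then 0 else (j + 1) ^ n)"

definition power_diff2 :: "nat \<Rightarrow> int \<Rightarrow> int" where
  "power_diff2 n j = shifted_power n j - 2 * shifted_power n (j - 1) + shifted_power n (j - 2)"

definition power_diff2_series :: "nat \<Rightarrow> bool \<Rightarrow> bool \<Rightarrow> int fps" where
  "power_diff2_series n e d = Abs_fps (\<lambda>m. power_diff2 n (2 * int m - 1 - forced_des e d))"

lemma shifted_power_Suc: "shifted_power (Suc n) j = (j + 1) * shifted_power n j"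
  by (simp add: shifted_power_def)

lemma power_diff2_neg: "j < 0 \<Longrightarrow> power_diff2 n j = 0"
  by (simp add: power_diff2_def shifted_power_def)

lemma power_diff2_series_Suc_Suc:
  "(1 - fps_X) * power_diff2_series (Suc (Suc k)) e d
    = insertion_op k (power_diff2_series (Suc k)) e d - 2 * (of_nat k * fps_X * power_diff2_series (Suc k) e d)"
proof -
  define T where "T = power_diff2_series (Suc k)"
  define c where "c = forced_des e d"
  have nth_T: "fps_nth (T e' d') m = power_diff2 (Suc k) (2 * int m - 1 - forced_des e' d')" for e' d' m
    by (simp add: T_def power_diff2_series_def)
  have nth_X_deriv: "fps_nth (fps_X * fps_deriv F) j = of_nat j * fps_nth F j" for F :: "int fps" and j
    by (cases j) (simp_all add: fps_deriv_nth)
  have nth_scale: "fps_nth (of_int a * F) j = a * fps_nth F j" "fps_nth (of_nat b * F) j = int b * fps_nth F j"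
    "fps_nth (2 * F) j = 2 * fps_nth F j" for F :: "int fps" and a b j
    by (simp_all add: fps_of_int[symmetric] fps_of_nat[symmetric] fps_numeral_fps_const)
  have rhs: "insertion_op k T e d - 2 * (of_nat k * fps_X * T e d)
      = fps_X * T True d + T False d + T e True + fps_X * T e False
        + 2 * (fps_X * fps_deriv (T e d) - fps_X * (fps_X * fps_deriv (T e d)) - of_nat k * (fps_X * T e d)
               + of_int (int k + c) * (fps_X * T e d) - of_int c * T e d)"
    by (simp add: insertion_op_def c_def algebra_simps)
  have "fps_nth ((1 - fps_X) * power_diff2_series (Suc (Suc k)) e d) j
      = fps_nth (insertion_op k T e d - 2 * (of_nat k * fps_X * T e d)) j" for j
  proof (cases j)
    case 0
    then show ?thesis
      unfolding rhs
      by (simp only: fps_add_nth fps_sub_nth nth_scale nth_X_deriv fps_X_mult_nth)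
         (simp add: nth_T power_diff2_series_def power_diff2_neg forced_des_def c_def)
  next
    case (Suc i)
    then show ?thesis
      unfolding rhs
      by (simp only: fps_add_nth fps_sub_nth nth_scale nth_X_deriv fps_X_mult_nth)
         (cases e; cases d; simp add: nth_T power_diff2_series_def power_diff2_def shifted_power_Suc
            forced_des_def c_def algebra_simps)
  qed
  then show ?thesis
    by (simp add: fps_eq_iff T_def)
qed

lemma insertion_op_power_mult:
  "insertion_op k (\<lambda>e d. (1 - fps_X) ^ k * G e d) e d
    = (1 - fps_X) ^ k * (insertion_op k G e d - 2 * (of_nat k * fps_X * G e d))"
proof -
  have k_pow: "of_nat k * ((1 - fps_X) * (1 - fps_X) ^ (k - 1)) = (of_nat k * (1 - fps_X) ^ k :: int fps)"
    by (cases k) simp_all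
  have "fps_deriv ((1 - fps_X) ^ k :: int fps) = - (of_nat k * (1 - fps_X) ^ (k - 1))"
    by (simp add: fps_deriv_power')
  then have "fps_X * (1 - fps_X) * fps_deriv ((1 - fps_X) ^ k * G e d)
      = (1 - fps_X) ^ k * (fps_X * (1 - fps_X) * fps_deriv (G e d))
        - fps_X * G e d * (of_nat k * ((1 - fps_X) * (1 - fps_X) ^ (k - 1)))"
    by (simp add: algebra_simps)
  then have deriv_eq: "fps_X * (1 - fps_X) * fps_deriv ((1 - fps_X) ^ k * G e d)
      = (1 - fps_X) ^ k * (fps_X * (1 - fps_X) * fps_deriv (G e d)) - of_nat k * fps_X * (1 - fps_X) ^ k * G e d"
    unfolding k_pow by (simp add: algebra_simps)
  show ?thesis
    unfolding insertion_op_def deriv_eq by (simp add: algebra_simps)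
qed

lemma des_series_1: "des_series 1 e d = power_diff2_series 1 e d"
proof -
  let ?z = "(\<lambda>_. 0) :: nat \<Rightarrow> int"
  have des: "des_padded 1 (insert_at ?z 1 s) = 1" if "s \<in> {1, -1}" for s
    using that by (auto simp: des_padded_def desc_at_def insert_at_def)
  have "des_series 1 e d = (\<Sum>s\<in>{1, -1}. des_weight 1 e d (insert_at ?z 1 s))"
    by (simp add: des_series_def sum_signed_perms_Suc[where m = 0, simplified] signed_perms_0)
  also have "\<dots> = (if e = d then fps_X else 0)"
    using des by (cases e; cases d) (simp_all add: des_weight_def has_sign_def insert_at_def)
  also have "\<dots> = power_diff2_series 1 e d"
    by (cases e; cases d)
       (auto simp: fps_eq_iff power_diff2_series_def power_diff2_def shifted_power_def forced_des_def fps_X_nth)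
  finally show ?thesis .
qed

lemma des_series_eq_power_diff2_series:
  "des_series (Suc k) e d = (1 - fps_X) ^ k * power_diff2_series (Suc k) e d"
proof (induction k arbitrary: e d)
  case 0
  show ?case using des_series_1 by (simp add: One_nat_def)
next
  case (Suc k)
  have "des_series (Suc k) = (\<lambda>e d. (1 - fps_X) ^ k * power_diff2_series (Suc k) e d)"
    using Suc.IH by (intro ext)
  then have "des_series (Suc (Suc k)) e d
      = insertion_op k (\<lambda>e d. (1 - fps_X) ^ k * power_diff2_series (Suc k) e d) e d"
    by (simp add: des_series_Suc_Suc)
  also have "\<dots> = (1 - fps_X) ^ k * ((1 - fps_X) * power_diff2_series (Suc (Suc k)) e d)"
    by (simp add: insertion_op_power_mult power_diff2_series_Suc_Suc)
  finally show ?case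
    by (simp add: mult.assoc)
qed

lemma fps_of_poly_Bpp:
  assumes "1 \<le> n"
  shows "fps_of_poly (Bpp n) = (1 - fps_X) ^ (n - 1) * Abs_fps (\<lambda>m. power_diff2 n (2 * int m))"
proof -
  let ?A = "{\<sigma> \<in> signed_perms n. 0 < \<sigma> 1 \<and> 0 < \<sigma> n}"
  have "fps_X * fps_of_poly (Bpp n) = (\<Sum>\<sigma>\<in>?A. fps_X ^ Suc (desB n \<sigma>))"
    by (simp add: Bpp_def fps_of_poly_sum fps_of_poly_monom' sum_distrib_left)
  also have "\<dots> = (\<Sum>\<sigma>\<in>?A. fps_X ^ des_padded n \<sigma>)"
    by (rule sum.cong) (simp_all add: des_padded_eq_Suc_desB)
  also have "\<dots> = des_series n True True"
    unfolding des_series_def des_weight_def has_sign_def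
    using finite_signed_perms[of n] by (simp add: sum.inter_filter)
  also have "\<dots> = (1 - fps_X) ^ (n - 1) * power_diff2_series n True True"
    using des_series_eq_power_diff2_series[of "n - 1"] assms by simp
  also have "power_diff2_series n True True = fps_X * Abs_fps (\<lambda>m. power_diff2 n (2 * int m))"
    by (simp add: fps_eq_iff power_diff2_series_def forced_des_def fps_X_mult_nth power_diff2_neg algebra_simps
        split: nat.split)
  finally show ?thesis
    by (simp add: mult.left_commute[of fps_X])
qed

section \<open>Comparison of both sides\<close>

lemma card_boundary_multichains_eq_power_diff2:
  "int (card (multichains interval_le (boundary_intervals n) m)) = power_diff2 n (2 * int m)"
proof (cases "m = 0")
  case True
  then show ?thesis
    by (simp add: card_multichains_0 power_diff2_def shifted_power_def)
next
  case False
  then show ?thesis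
    by (simp add: card_boundary_multichains power_diff2_def shifted_power_def algebra_simps)
qed

lemma fps_of_poly_h_poly_Int_boundary:
  "fps_of_poly (h_poly (Int_boundary n)) = (1 - fps_X) ^ (n - 1) * Abs_fps (\<lambda>m. power_diff2 n (2 * int m))"
  using fps_of_poly_h_poly_order_complex[OF reflp_interval_le transp_interval_le antisymp_interval_le
      finite_boundary_intervals, of n]
  by (simp add: Int_boundary_eq_order_complex[symmetric] cdim1_Int_boundary
      card_boundary_multichains_eq_power_diff2)

theorem proposition5p1:
  fixes n :: nat
  assumes "n \<ge> 1"
  shows "h_poly (Int_boundary n) = Bpp n"
proof -
  have "fps_of_poly (h_poly (Int_boundary n)) = fps_of_poly (Bpp n)"
    unfolding fps_of_poly_h_poly_Int_boundary fps_of_poly_Bpp[OF assms] ..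
  then show ?thesis
    by (simp add: fps_of_poly_eq_iff)
qed

end
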